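(* For every integer $n\ge 1$, the polytope \[Q_n=\sum_{i=0}^{n-1}\mathrm{conv}\{e_{3i+1}+e_{3i+3},\,e_{3i+2}+e_{3n+1}\}+\sum_{0\le i<j\le n-1}\mathrm{conv}\{e_{3i+1}+e_{3i+3}+e_{3j+2},\,e_{3i+2}+e_{3j+1}+e_{3j+3},\,e_{3i+2}+e_{3j+2}+e_{3n+1}\}\subseteq\mathbb{R}^{3n+1}\] is unimodularly equivalent to \[\overline{Q}_n=\sum_{S\in\mathcal{I}_n}\Delta_S\subseteq\mathbb{R}^{n+1}.\]
   Context: All sums of polytopes are Minkowski sums; $e_k$ denotes standard basis vectors. $Q_n$ is a state polytope for the toric ideal of the code $P(2_n)$. Let $\mathcal{I}_n=\{S\cup\{n+1\} : S\subseteq[n],\ |S|\in\{1,2\}\}$, and for $S\subseteq[n+1]$ let $\Delta_S=\mathrm{conv}\{e_i\in\mathbb{R}^{n+1}: i\in S\}$. Polytopes $P,P'\subseteq\mathbb{R}^m$ are unimodularly equivalent if $P'=MP+v$ with $M\in\mathrm{GL}_m(\mathbb{Z})$, $v\in\mathbb{Z}^m$; for $P\subseteq\mathbb{R}^N$, $P'\subseteq\mathbb{R}^m$ with $N>m$, this means $P$ is unimodularly equivalent to $P'\times\{0\}\subseteq\mathbb{R}^N$. *)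

theory Defs
  imports "HOL-Analysis.Analysis"
begin

text \<open>Points of R^m are modelled as functions nat => real whose coordinates are indexed
by 1..m and vanish outside {1..m}.  Then R^m is contained in R^N for m <= N, and the
inclusion is exactly P' |-> P' x {0}.\<close>

type_synonym pt = "nat \<Rightarrow> real"

definition in_Rn :: "nat \<Rightarrow> pt \<Rightarrow> bool" where
  "in_Rn m x \<longleftrightarrow> (\<forall>i. i \<notin> {1..m} \<longrightarrow> x i = 0)"

definition unit_vec :: "nat \<Rightarrow> pt" ("e") where
  "unit_vec k = (\<lambda>i. if i = k then 1 else 0)"

definition vadd :: "pt \<Rightarrow> pt \<Rightarrow> pt" (infixl "\<oplus>" 65) where
  "x \<oplus> y = (\<lambda>i. x i + y i)"

definition conv_hull :: "pt set \<Rightarrow> pt set" where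
  "conv_hull V = {x. \<exists>c. (\<forall>v\<in>V. 0 \<le> c v) \<and> sum c V = 1 \<and> x = (\<lambda>i. \<Sum>v\<in>V. c v * v i)}"

definition msum :: "'a set \<Rightarrow> ('a \<Rightarrow> pt set) \<Rightarrow> pt set" where
  "msum I P = {x. \<exists>f. (\<forall>j\<in>I. f j \<in> P j) \<and> x = (\<lambda>i. \<Sum>j\<in>I. f j i)}"

definition mplus :: "pt set \<Rightarrow> pt set \<Rightarrow> pt set" where
  "mplus A B = {x. \<exists>a\<in>A. \<exists>b\<in>B. x = a \<oplus> b}"

definition Q :: "nat \<Rightarrow> pt set" where
  "Q n = mplus
     (msum {..<n} (\<lambda>i. conv_hull {e (3*i+1) \<oplus> e (3*i+3), e (3*i+2) \<oplus> e (3*n+1)}))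
     (msum {(i,j). i < j \<and> j \<le> n - 1}
        (\<lambda>(i,j). conv_hull {e (3*i+1) \<oplus> e (3*i+3) \<oplus> e (3*j+2),
                             e (3*i+2) \<oplus> e (3*j+1) \<oplus> e (3*j+3),
                             e (3*i+2) \<oplus> e (3*j+2) \<oplus> e (3*n+1)}))"

definition I_fam :: "nat \<Rightarrow> nat set set" where
  "I_fam n = {insert (n+1) S | S. S \<subseteq> {1..n} \<and> card S \<in> {1,2}}"

definition Delta :: "nat set \<Rightarrow> pt set" where
  "Delta S = conv_hull (e ` S)"

definition Qbar :: "nat \<Rightarrow> pt set" where
  "Qbar n = msum (I_fam n) Delta"

definition int_GL :: "nat \<Rightarrow> (nat \<Rightarrow> nat \<Rightarrow> int) \<Rightarrow> bool" where
  "int_GL N M \<longleftrightarrow> (\<exists>M'. \<forall>i\<in>{1..N}. \<forall>k\<in>{1..N}.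
      (\<Sum>j=1..N. M i j * M' j k) = (if i = k then 1 else 0)
    \<and> (\<Sum>j=1..N. M' i j * M j k) = (if i = k then 1 else 0))"

definition affine_map :: "nat \<Rightarrow> (nat \<Rightarrow> nat \<Rightarrow> int) \<Rightarrow> (nat \<Rightarrow> int) \<Rightarrow> pt \<Rightarrow> pt" where
  "affine_map N M v x = (\<lambda>i. if i \<in> {1..N} then (\<Sum>j=1..N. of_int (M i j) * x j) + of_int (v i) else 0)"

definition unimod_equiv :: "nat \<Rightarrow> pt set \<Rightarrow> pt set \<Rightarrow> bool" where
  "unimod_equiv N P P' \<longleftrightarrow> P \<subseteq> Collect (in_Rn N) \<and> P' \<subseteq> Collect (in_Rn N) \<and>
     (\<exists>M v. int_GL N M \<and> P' = affine_map N M v ` P)"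

text \<open>P in R^N and P' in R^m with N > m: P is unimodularly equivalent to P' x {0}
(which, in our encoding, is P' itself viewed inside R^N).\<close>
definition unimod_equiv_dims :: "nat \<Rightarrow> pt set \<Rightarrow> nat \<Rightarrow> pt set \<Rightarrow> bool" where
  "unimod_equiv_dims N P m P' \<longleftrightarrow> m < N \<and> P \<subseteq> Collect (in_Rn N) \<and>
     P' \<subseteq> Collect (in_Rn m) \<and> unimod_equiv N P P'"

end

theory Submission
  imports Defs "HOL-Library.Function_Algebras"
begin

(* The integer linear map L sending e_{3q+1} to e_{q+1} + e_{n+2+q} + e_{2n+2+q}, e_{3q+2} to
   e_{2n+2+q}, e_{3q+3} to -e_{n+2+q} (for q < n) and e_{3n+1} to e_{n+1} is unimodular.
   It maps the q-th segment of Q_n onto Delta_{q+1,n+1} + e_{2n+2+q}, and the (i,j)-th triangle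
   onto Delta_{i+1,j+1,n+1} + e_{2n+2+i} + e_{2n+2+j}.  The image of a Minkowski sum is the
   Minkowski sum of the images, and these simplices are exactly the summands of Qbar_n, so
   x |-> L x - n (e_{2n+2} + ... + e_{3n+1}) maps Q_n onto Qbar_n. *)

lemma vadd_eq_plus: "x \<oplus> y = x + y"
  by (simp add: vadd_def plus_fun_def)

lemma unit_vec_eq_iff [simp]: "e a = e b \<longleftrightarrow> a = b"
  by (metis unit_vec_def zero_neq_one)

abbreviation lin_map :: "nat \<Rightarrow> (nat \<Rightarrow> nat \<Rightarrow> int) \<Rightarrow> pt \<Rightarrow> pt" where
  "lin_map N M \<equiv> affine_map N M (\<lambda>_. 0)"

lemma affine_map_eq_lin_map_plus:
  "affine_map N M v x = lin_map N M x + (\<lambda>i. if i \<in> {1..N} then of_int (v i) else 0)"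
  by (auto simp: affine_map_def)

lemma lin_map_add: "lin_map N M (x + y) = lin_map N M x + lin_map N M y"
  by (auto simp: affine_map_def distrib_left sum.distrib)

lemma lin_map_uminus: "lin_map N M (- x) = - lin_map N M x"
  by (auto simp: affine_map_def sum_negf)

lemma lin_map_diff: "lin_map N M (x - y) = lin_map N M x - lin_map N M y"
  by (metis diff_conv_add_uminus lin_map_add lin_map_uminus)

lemma lin_map_sum: "lin_map N M (\<lambda>i. \<Sum>j\<in>J. f j i) = (\<lambda>i. \<Sum>j\<in>J. lin_map N M (f j) i)"
  unfolding affine_map_def by (rule ext) (auto simp: sum_distrib_left intro: sum.swap)

lemma lin_map_convex_comb:
  assumes "sum c V = 1"
  shows "lin_map N M (\<lambda>i. \<Sum>v\<in>V. c v * v i) - w = (\<lambda>i. \<Sum>v\<in>V. c v * (lin_map N M v - w) i)"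
proof -
  have "lin_map N M (\<lambda>i. \<Sum>v\<in>V. c v * v i) = (\<lambda>i. \<Sum>v\<in>V. c v * lin_map N M v i)"
    unfolding affine_map_def
    by (rule ext) (auto simp: sum_distrib_left mult.left_commute intro: sum.swap)
  then show ?thesis
    using assms by (auto simp: right_diff_distrib sum_subtractf simp flip: sum_distrib_right)
qed

lemma lin_map_unit_vec:
  "k \<in> {1..N} \<Longrightarrow> lin_map N M (e k) = (\<lambda>i. if i \<in> {1..N} then of_int (M i k) else 0)"
  by (auto simp: affine_map_def unit_vec_def if_distrib[of "\<lambda>x. _ * x"] cong: if_cong)

lemma lin_map_comp_unit_vec:
  assumes "i \<in> {1..N}" "k \<in> {1..N}"
  shows "lin_map N M (lin_map N M' (e k)) i = of_int (\<Sum>j=1..N. M i j * M' j k)"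
  unfolding lin_map_unit_vec[OF assms(2)] using assms(1) by (simp add: affine_map_def)

lemma int_GL_if_inverse_lin_maps:
  assumes "\<And>k. k \<in> {1..N} \<Longrightarrow> lin_map N M (lin_map N M' (e k)) = e k"
    and "\<And>k. k \<in> {1..N} \<Longrightarrow> lin_map N M' (lin_map N M (e k)) = e k"
  shows "int_GL N M"
  unfolding int_GL_def
proof (intro exI[of _ M'] ballI conjI)
  fix i k assume ik: "i \<in> {1..N}" "k \<in> {1..N}"
  have "real_of_int (\<Sum>j=1..N. M i j * M' j k) = lin_map N M (lin_map N M' (e k)) i"
    by (rule lin_map_comp_unit_vec[OF ik, symmetric])
  also have "\<dots> = real_of_int (if i = k then 1 else 0)"
    by (simp only: assms(1)[OF ik(2)]) (simp add: unit_vec_def)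
  finally show "(\<Sum>j=1..N. M i j * M' j k) = (if i = k then 1 else 0)"
    by (simp only: of_int_eq_iff)
  have "real_of_int (\<Sum>j=1..N. M' i j * M j k) = lin_map N M' (lin_map N M (e k)) i"
    by (rule lin_map_comp_unit_vec[OF ik, symmetric])
  also have "\<dots> = real_of_int (if i = k then 1 else 0)"
    by (simp only: assms(2)[OF ik(2)]) (simp add: unit_vec_def)
  finally show "(\<Sum>j=1..N. M' i j * M j k) = (if i = k then 1 else 0)"
    by (simp only: of_int_eq_iff)
qed

lemma conv_hull_image:
  assumes inj: "inj_on T V"
    and affine: "\<And>c. sum c V = 1 \<Longrightarrow> T (\<lambda>i. \<Sum>v\<in>V. c v * v i) = (\<lambda>i. \<Sum>v\<in>V. c v * T v i)"
  shows "T ` conv_hull V = conv_hull (T ` V)"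
proof
  show "T ` conv_hull V \<subseteq> conv_hull (T ` V)"
  proof
    fix y assume "y \<in> T ` conv_hull V"
    then obtain c where c: "\<forall>v\<in>V. 0 \<le> c v" "sum c V = 1" and y: "y = T (\<lambda>i. \<Sum>v\<in>V. c v * v i)"
      unfolding conv_hull_def by auto
    define c' where "c' = c \<circ> the_inv_into V T"
    have c': "c' (T v) = c v" if "v \<in> V" for v
      unfolding c'_def using the_inv_into_f_f[OF inj that] by simp
    have "y = (\<lambda>i. \<Sum>u\<in>T ` V. c' u * u i)"
      unfolding y affine[OF c(2)] by (simp add: sum.reindex[OF inj] c')
    then show "y \<in> conv_hull (T ` V)"
      unfolding conv_hull_def using c by (auto simp: c' sum.reindex[OF inj] intro!: exI[of _ c'])
  qed
  show "conv_hull (T ` V) \<subseteq> T ` conv_hull V"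
  proof
    fix y assume "y \<in> conv_hull (T ` V)"
    then obtain c where c: "\<forall>u\<in>T ` V. 0 \<le> c u" "sum c (T ` V) = 1"
      and y: "y = (\<lambda>i. \<Sum>u\<in>T ` V. c u * u i)"
      unfolding conv_hull_def by auto
    have c1: "sum (c \<circ> T) V = 1" using c(2) by (simp add: sum.reindex[OF inj])
    have "y = T (\<lambda>i. \<Sum>v\<in>V. (c \<circ> T) v * v i)"
      unfolding y affine[OF c1] by (simp add: sum.reindex[OF inj])
    moreover have "(\<lambda>i. \<Sum>v\<in>V. (c \<circ> T) v * v i) \<in> conv_hull V"
      unfolding conv_hull_def using c c1 by auto
    ultimately show "y \<in> T ` conv_hull V" by blast
  qed
qed

lemma conv_hull_affine_image:
  assumes "inj_on (\<lambda>x. lin_map N M x - w) V"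
  shows "(\<lambda>x. lin_map N M x - w) ` conv_hull V = conv_hull ((\<lambda>x. lin_map N M x - w) ` V)"
  using assms by (intro conv_hull_image) (simp_all add: lin_map_convex_comb)

lemma msum_cong: "(\<And>j. j \<in> I \<Longrightarrow> P j = P' j) \<Longrightarrow> msum I P = msum I P'"
  unfolding msum_def by auto

lemma msum_reindex:
  assumes inj: "inj_on h I"
  shows "msum (h ` I) P = msum I (P \<circ> h)"
proof
  show "msum (h ` I) P \<subseteq> msum I (P \<circ> h)"
  proof
    fix x assume "x \<in> msum (h ` I) P"
    then obtain f where f: "\<forall>j\<in>h ` I. f j \<in> P j" and x: "x = (\<lambda>i. \<Sum>j\<in>h ` I. f j i)"
      unfolding msum_def by auto
    show "x \<in> msum I (P \<circ> h)"
      unfolding msum_def using f by (auto simp: x sum.reindex[OF inj] intro!: exI[of _ "f \<circ> h"])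
  qed
  show "msum I (P \<circ> h) \<subseteq> msum (h ` I) P"
  proof
    fix x assume "x \<in> msum I (P \<circ> h)"
    then obtain f where f: "\<forall>j\<in>I. f j \<in> P (h j)" and x: "x = (\<lambda>i. \<Sum>j\<in>I. f j i)"
      unfolding msum_def by auto
    define g where "g = f \<circ> the_inv_into I h"
    have g: "g (h j) = f j" if "j \<in> I" for j
      unfolding g_def using the_inv_into_f_f[OF inj that] by simp
    show "x \<in> msum (h ` I) P"
      unfolding msum_def using f by (auto simp: g x sum.reindex[OF inj] intro!: exI[of _ g])
  qed
qed

lemma msum_Un:
  assumes "finite I" "finite J" "I \<inter> J = {}"
  shows "msum (I \<union> J) P = mplus (msum I P) (msum J P)"
proof
  show "msum (I \<union> J) P \<subseteq> mplus (msum I P) (msum J P)"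
  proof
    fix x assume "x \<in> msum (I \<union> J) P"
    then obtain f where f: "\<forall>j\<in>I \<union> J. f j \<in> P j" and x: "x = (\<lambda>i. \<Sum>j\<in>I \<union> J. f j i)"
      unfolding msum_def by auto
    have "x = (\<lambda>i. \<Sum>j\<in>I. f j i) + (\<lambda>i. \<Sum>j\<in>J. f j i)"
      unfolding x using assms by (simp add: sum.union_disjoint plus_fun_def)
    moreover have "(\<lambda>i. \<Sum>j\<in>I. f j i) \<in> msum I P" "(\<lambda>i. \<Sum>j\<in>J. f j i) \<in> msum J P"
      unfolding msum_def using f by auto
    ultimately show "x \<in> mplus (msum I P) (msum J P)" unfolding mplus_def vadd_eq_plus by auto
  qed
  show "mplus (msum I P) (msum J P) \<subseteq> msum (I \<union> J) P"
  proof
    fix x assume "x \<in> mplus (msum I P) (msum J P)"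
    then obtain f g where f: "\<forall>j\<in>I. f j \<in> P j" and g: "\<forall>j\<in>J. g j \<in> P j"
      and x: "x = (\<lambda>i. \<Sum>j\<in>I. f j i) + (\<lambda>i. \<Sum>j\<in>J. g j i)"
      unfolding msum_def mplus_def vadd_eq_plus by auto
    let ?h = "\<lambda>j. if j \<in> I then f j else g j"
    have "x = (\<lambda>i. \<Sum>j\<in>I \<union> J. ?h j i)"
      unfolding x plus_fun_def using assms
      by (auto simp: sum.union_disjoint intro!: ext arg_cong2[where f="(+)"] sum.cong)
    then show "x \<in> msum (I \<union> J) P"
      unfolding msum_def using f g by (auto intro!: exI[of _ ?h])
  qed
qed

lemma image_mplus:
  assumes "\<And>x y. F (x + y) = G x + H y"
  shows "F ` mplus X Y = mplus (G ` X) (H ` Y)"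
proof
  show "F ` mplus X Y \<subseteq> mplus (G ` X) (H ` Y)"
    unfolding mplus_def vadd_eq_plus using assms by auto
  show "mplus (G ` X) (H ` Y) \<subseteq> F ` mplus X Y"
  proof
    fix z assume "z \<in> mplus (G ` X) (H ` Y)"
    then obtain x y where "x \<in> X" "y \<in> Y" "z = F (x + y)"
      unfolding mplus_def vadd_eq_plus assms by auto
    then show "z \<in> F ` mplus X Y" unfolding mplus_def vadd_eq_plus by auto
  qed
qed

lemma msum_affine_image:
  "msum I (\<lambda>j. (\<lambda>x. lin_map N M x - w j) ` P j)
       = (\<lambda>x. lin_map N M x - (\<lambda>i. \<Sum>j\<in>I. w j i)) ` msum I P"
proof
  show "msum I (\<lambda>j. (\<lambda>x. lin_map N M x - w j) ` P j)
      \<subseteq> (\<lambda>x. lin_map N M x - (\<lambda>i. \<Sum>j\<in>I. w j i)) ` msum I P"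
  proof
    fix y assume "y \<in> msum I (\<lambda>j. (\<lambda>x. lin_map N M x - w j) ` P j)"
    then obtain g where g: "\<forall>j\<in>I. \<exists>x\<in>P j. g j = lin_map N M x - w j"
      and y: "y = (\<lambda>i. \<Sum>j\<in>I. g j i)"
      unfolding msum_def by blast
    then obtain f where f: "\<forall>j\<in>I. f j \<in> P j \<and> g j = lin_map N M (f j) - w j"
      by metis
    have "y = lin_map N M (\<lambda>i. \<Sum>j\<in>I. f j i) - (\<lambda>i. \<Sum>j\<in>I. w j i)"
      unfolding y lin_map_sum using f by (simp add: sum_subtractf fun_diff_def)
    moreover have "(\<lambda>i. \<Sum>j\<in>I. f j i) \<in> msum I P" unfolding msum_def using f by auto
    ultimately show "y \<in> (\<lambda>x. lin_map N M x - (\<lambda>i. \<Sum>j\<in>I. w j i)) ` msum I P" by blast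
  qed
  show "(\<lambda>x. lin_map N M x - (\<lambda>i. \<Sum>j\<in>I. w j i)) ` msum I P
      \<subseteq> msum I (\<lambda>j. (\<lambda>x. lin_map N M x - w j) ` P j)"
  proof
    fix y assume "y \<in> (\<lambda>x. lin_map N M x - (\<lambda>i. \<Sum>j\<in>I. w j i)) ` msum I P"
    then obtain f where f: "\<forall>j\<in>I. f j \<in> P j"
      and y: "y = lin_map N M (\<lambda>i. \<Sum>j\<in>I. f j i) - (\<lambda>i. \<Sum>j\<in>I. w j i)"
      unfolding msum_def by auto
    have "y = (\<lambda>i. \<Sum>j\<in>I. (lin_map N M (f j) - w j) i)"
      unfolding y lin_map_sum by (simp add: sum_subtractf fun_diff_def)
    then show "y \<in> msum I (\<lambda>j. (\<lambda>x. lin_map N M x - w j) ` P j)"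
      unfolding msum_def using f by (auto intro!: exI[of _ "\<lambda>j. lin_map N M (f j) - w j"])
  qed
qed

lemma in_Rn_unit_vec: "k \<in> {1..m} \<Longrightarrow> in_Rn m (e k)"
  unfolding in_Rn_def unit_vec_def by auto

lemma in_Rn_add: "in_Rn m x \<Longrightarrow> in_Rn m y \<Longrightarrow> in_Rn m (x + y)"
  unfolding in_Rn_def by auto

lemma in_Rn_mono: "in_Rn m x \<Longrightarrow> m \<le> N \<Longrightarrow> in_Rn N x"
  unfolding in_Rn_def by auto

lemma conv_hull_in_Rn: "(\<And>v. v \<in> V \<Longrightarrow> in_Rn m v) \<Longrightarrow> conv_hull V \<subseteq> Collect (in_Rn m)"
  unfolding in_Rn_def conv_hull_def by (auto intro!: sum.neutral)

lemma msum_in_Rn: "(\<And>j. j \<in> I \<Longrightarrow> P j \<subseteq> Collect (in_Rn m)) \<Longrightarrow> msum I P \<subseteq> Collect (in_Rn m)"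
  unfolding in_Rn_def msum_def by (auto intro!: sum.neutral)

lemma mplus_in_Rn: "A \<subseteq> Collect (in_Rn m) \<Longrightarrow> B \<subseteq> Collect (in_Rn m) \<Longrightarrow> mplus A B \<subseteq> Collect (in_Rn m)"
  unfolding mplus_def vadd_eq_plus using in_Rn_add by blast

abbreviation ordered_pairs :: "nat \<Rightarrow> (nat \<times> nat) set" where
  "ordered_pairs n \<equiv> {(i,j). i < j \<and> j < n}"

lemma ordered_pairs_eq: "{(i,j). i < j \<and> j \<le> n - 1} = ordered_pairs n"
  by auto

lemma finite_ordered_pairs: "finite (ordered_pairs n)"
  by (rule finite_subset[of _ "{..<n} \<times> {..<n}"]) auto

lemma sum_ordered_pairs:
  fixes f :: "nat \<Rightarrow> 'a :: comm_semiring_1"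
  shows "(\<Sum>(i,j)\<in>ordered_pairs n. f i + f j) = of_nat (n - 1) * (\<Sum>k<n. f k)"
proof (induction n)
  case (Suc n)
  have pairs: "ordered_pairs (Suc n) = ordered_pairs n \<union> (\<lambda>i. (i,n)) ` {..<n}"
    by auto
  have "(\<Sum>(i,j)\<in>ordered_pairs (Suc n). f i + f j)
      = of_nat (n - 1) * (\<Sum>k<n. f k) + ((\<Sum>k<n. f k) + of_nat n * f n)"
    unfolding pairs Suc.IH[symmetric] using finite_ordered_pairs
    by (subst sum.union_disjoint) (auto simp: sum.reindex inj_on_def sum.distrib)
  also have "\<dots> = of_nat n * (\<Sum>k<Suc n. f k)"
    by (cases n) (simp_all add: algebra_simps)
  finally show ?case by simp
qed simp

lemma sum_unit_vec_interval: "(\<Sum>k<n. e (m+k) r) = (if m \<le> r \<and> r < m+n then 1 else 0)"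
  by (induction n) (auto simp: unit_vec_def)

definition coord_change :: "nat \<Rightarrow> nat \<Rightarrow> nat \<Rightarrow> int" where
  "coord_change n r c =
    (if c = 3*n+1 then of_bool (r = n+1)
     else let q = (c-1) div 3 in
       if (c-1) mod 3 = 0 then of_bool (r = q+1) + of_bool (r = n+2+q) + of_bool (r = 2*n+2+q)
       else if (c-1) mod 3 = 1 then of_bool (r = 2*n+2+q)
       else - of_bool (r = n+2+q))"

definition coord_change_inv :: "nat \<Rightarrow> nat \<Rightarrow> nat \<Rightarrow> int" where
  "coord_change_inv n r k =
    (if k \<le> n then of_bool (r = 3*k-2) + of_bool (r = 3*k) - of_bool (r = 3*k-1)
     else if k = n+1 then of_bool (r = 3*n+1)
     else if k \<le> 2*n+1 then - of_bool (r = 3*(k-n-1))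
     else of_bool (r = 3*(k-2*n-1)-1))"

abbreviation coord_lin :: "nat \<Rightarrow> pt \<Rightarrow> pt" where
  "coord_lin n \<equiv> lin_map (3*n+1) (coord_change n)"

abbreviation coord_lin_inv :: "nat \<Rightarrow> pt \<Rightarrow> pt" where
  "coord_lin_inv n \<equiv> lin_map (3*n+1) (coord_change_inv n)"

lemma coord_lin_unit_vec:
  assumes "q < n"
  shows "coord_lin n (e (3*q+1)) = e (q+1) + e (n+2+q) + e (2*n+2+q)"
    and "coord_lin n (e (3*q+2)) = e (2*n+2+q)"
    and "coord_lin n (e (3*q+3)) = - e (n+2+q)"
proof -
  have "Suc (3*q) div 3 = q" "Suc (3*q) mod 3 = 1" "Suc (Suc (3*q)) div 3 = q" "Suc (Suc (3*q)) mod 3 = 2"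
    by presburger+
  then show "coord_lin n (e (3*q+1)) = e (q+1) + e (n+2+q) + e (2*n+2+q)"
    and "coord_lin n (e (3*q+2)) = e (2*n+2+q)"
    and "coord_lin n (e (3*q+3)) = - e (n+2+q)"
    using assms by (simp_all add: lin_map_unit_vec) (auto simp: coord_change_def unit_vec_def fun_eq_iff)
qed

lemma coord_lin_unit_vec_last: "coord_lin n (e (3*n+1)) = e (n+1)"
  by (simp add: lin_map_unit_vec) (auto simp: coord_change_def unit_vec_def fun_eq_iff)

lemma coord_lin_inv_unit_vec:
  assumes "q < n"
  shows "coord_lin_inv n (e (q+1)) = e (3*q+1) + e (3*q+3) - e (3*q+2)"
    and "coord_lin_inv n (e (n+2+q)) = - e (3*q+3)"
    and "coord_lin_inv n (e (2*n+2+q)) = e (3*q+2)"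
  using assms by (simp_all add: lin_map_unit_vec) (auto simp: coord_change_inv_def unit_vec_def fun_eq_iff)

lemma coord_lin_inv_unit_vec_last: "coord_lin_inv n (e (n+1)) = e (3*n+1)"
  by (simp add: lin_map_unit_vec) (auto simp: coord_change_inv_def unit_vec_def fun_eq_iff)

lemma index_cases_by_block:
  assumes "k \<in> {1..3*n+1::nat}"
  obtains q where "q < n" "k = q+1" | "k = n+1" | q where "q < n" "k = n+2+q"
    | q where "q < n" "k = 2*n+2+q"
proof -
  consider "k \<le> n" | "k = n+1" | "n+2 \<le> k \<and> k \<le> 2*n+1" | "2*n+2 \<le> k"
    using assms by force
  then show ?thesis
  proof cases
    case 1
    then show ?thesis using that(1)[of "k-1"] assms by auto
  next
    case 3
    then show ?thesis using that(3)[of "k-n-2"] by auto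
  next
    case 4
    then show ?thesis using that(4)[of "k-2*n-2"] assms by auto
  qed (use that in auto)
qed

lemma index_cases_by_residue:
  assumes "k \<in> {1..3*n+1::nat}"
  obtains q where "q < n" "k = 3*q+1" | q where "q < n" "k = 3*q+2" | q where "q < n" "k = 3*q+3"
    | "k = 3*n+1"
proof -
  have "k = 3*n+1 \<or> (k-1) div 3 < n \<and>
      (k = 3*((k-1) div 3)+1 \<or> k = 3*((k-1) div 3)+2 \<or> k = 3*((k-1) div 3)+3)"
    using assms by auto
  then show ?thesis using that by blast
qed

lemma int_GL_coord_change: "int_GL (3*n+1) (coord_change n)"
proof (rule int_GL_if_inverse_lin_maps[where M' = "coord_change_inv n"])
  fix k assume "k \<in> {1..3*n+1}"
  then show "coord_lin n (coord_lin_inv n (e k)) = e k"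
    by (cases rule: index_cases_by_block)
      (simp_all only: coord_lin_unit_vec coord_lin_unit_vec_last coord_lin_inv_unit_vec
        coord_lin_inv_unit_vec_last lin_map_add lin_map_diff lin_map_uminus,
       simp_all add: algebra_simps)
next
  fix k assume "k \<in> {1..3*n+1}"
  then show "coord_lin_inv n (coord_lin n (e k)) = e k"
    by (cases rule: index_cases_by_residue)
      (simp_all only: coord_lin_unit_vec coord_lin_unit_vec_last coord_lin_inv_unit_vec
        coord_lin_inv_unit_vec_last lin_map_add lin_map_diff lin_map_uminus,
       simp_all add: algebra_simps)
qed

lemma segment_image:
  assumes "q < n"
  shows "(\<lambda>x. coord_lin n x - e (2*n+2+q)) ` conv_hull {e (3*q+1) + e (3*q+3), e (3*q+2) + e (3*n+1)}
       = Delta {q+1, n+1}"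
proof -
  let ?T = "\<lambda>x. coord_lin n x - e (2*n+2+q)"
  have vertices: "?T (e (3*q+1) + e (3*q+3)) = e (q+1)" "?T (e (3*q+2) + e (3*n+1)) = e (n+1)"
    by (simp_all only: lin_map_add coord_lin_unit_vec[OF assms] coord_lin_unit_vec_last)
      (simp_all add: algebra_simps)
  moreover have "e (q+1) \<noteq> e (n+1)" using assms by simp
  ultimately show ?thesis
    unfolding Delta_def by (subst conv_hull_affine_image) (auto simp: inj_on_def)
qed

lemma triangle_image:
  assumes "i < j" "j < n"
  shows "(\<lambda>x. coord_lin n x - (e (2*n+2+i) + e (2*n+2+j))) `
           conv_hull {e (3*i+1) + e (3*i+3) + e (3*j+2), e (3*i+2) + e (3*j+1) + e (3*j+3),
                      e (3*i+2) + e (3*j+2) + e (3*n+1)}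
       = Delta {i+1, j+1, n+1}"
proof -
  let ?T = "\<lambda>x. coord_lin n x - (e (2*n+2+i) + e (2*n+2+j))"
  have "i < n" using assms by simp
  then have vertices: "?T (e (3*i+1) + e (3*i+3) + e (3*j+2)) = e (i+1)"
      "?T (e (3*i+2) + e (3*j+1) + e (3*j+3)) = e (j+1)"
      "?T (e (3*i+2) + e (3*j+2) + e (3*n+1)) = e (n+1)"
    by (simp_all only: lin_map_add coord_lin_unit_vec[OF \<open>i < n\<close>] coord_lin_unit_vec[OF assms(2)]
        coord_lin_unit_vec_last) (simp_all add: algebra_simps)
  moreover have "e (i+1) \<noteq> e (j+1)" "e (i+1) \<noteq> e (n+1)" "e (j+1) \<noteq> e (n+1)"
    using assms by simp_all
  ultimately show ?thesis
    unfolding Delta_def by (subst conv_hull_affine_image) (auto simp: inj_on_def)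
qed

(* The translations of the simplices add up to this vector: e_{2n+2+q} is subtracted once for
   the q-th segment and once for each of the n - 1 triangles (i,j) with q in {i,j}. *)
definition coord_shift :: "nat \<Rightarrow> nat \<Rightarrow> int" where
  "coord_shift n r = (if 2*n+2 \<le> r then - int n else 0)"

lemma simplex_shifts_sum:
  "(\<lambda>r. \<Sum>q<n. e (2*n+2+q) r)
     + (\<lambda>r. \<Sum>(i,j)\<in>ordered_pairs n. (e (2*n+2+i) + e (2*n+2+j)) r)
   = - (\<lambda>r. if r \<in> {1..3*n+1} then of_int (coord_shift n r) else 0)"
proof
  fix r
  let ?b = "\<Sum>q<n. e (2*n+2+q) r"
  have "?b + (\<Sum>(i,j)\<in>ordered_pairs n. (e (2*n+2+i) + e (2*n+2+j)) r) = real n * ?b"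
    using sum_ordered_pairs[of "\<lambda>q. e (2*n+2+q) r" n] by (cases n) (simp_all add: algebra_simps)
  also have "\<dots> = - (if r \<in> {1..3*n+1} then of_int (coord_shift n r) else 0)"
    unfolding sum_unit_vec_interval by (auto simp: coord_shift_def)
  finally show "((\<lambda>r. \<Sum>q<n. e (2*n+2+q) r)
     + (\<lambda>r. \<Sum>(i,j)\<in>ordered_pairs n. (e (2*n+2+i) + e (2*n+2+j)) r)) r
   = (- (\<lambda>r. if r \<in> {1..3*n+1} then of_int (coord_shift n r) else 0)) r"
    by simp
qed

lemma I_fam_eq:
  "I_fam n = (\<lambda>q. {q+1, n+1}) ` {..<n} \<union> (\<lambda>(i,j). {i+1, j+1, n+1}) ` ordered_pairs n"
proof
  show "I_fam n \<subseteq> (\<lambda>q. {q+1, n+1}) ` {..<n} \<union> (\<lambda>(i,j). {i+1, j+1, n+1}) ` ordered_pairs n"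
  proof
    fix X assume "X \<in> I_fam n"
    then obtain S where X: "X = insert (n+1) S" and S: "S \<subseteq> {1..n}" "card S = 1 \<or> card S = 2"
      unfolding I_fam_def by auto
    from S(2) show "X \<in> (\<lambda>q. {q+1, n+1}) ` {..<n} \<union> (\<lambda>(i,j). {i+1, j+1, n+1}) ` ordered_pairs n"
    proof
      assume "card S = 1"
      then obtain k where "S = {k}" by (auto simp: card_Suc_eq)
      then have "X = {(k-1)+1, n+1}" "k-1 < n" using S(1) X by auto
      then show ?thesis by blast
    next
      assume "card S = 2"
      then obtain a b where "S = {a, b}" "a < b"
        by (auto simp: card_2_iff) (metis insert_commute linorder_neqE_nat)
      then have "X = {(a-1)+1, (b-1)+1, n+1}" "a-1 < b-1" "b-1 < n" using S(1) X by auto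
      then show ?thesis by blast
    qed
  qed
  show "(\<lambda>q. {q+1, n+1}) ` {..<n} \<union> (\<lambda>(i,j). {i+1, j+1, n+1}) ` ordered_pairs n \<subseteq> I_fam n"
  proof
    fix X assume "X \<in> (\<lambda>q. {q+1, n+1}) ` {..<n} \<union> (\<lambda>(i,j). {i+1, j+1, n+1}) ` ordered_pairs n"
    then consider q where "q < n" "X = {q+1, n+1}" | i j where "i < j" "j < n" "X = {i+1, j+1, n+1}"
      by auto
    then show "X \<in> I_fam n"
    proof cases
      case 1
      then show ?thesis unfolding I_fam_def by (intro CollectI exI[of _ "{q+1}"]) auto
    next
      case 2
      then show ?thesis unfolding I_fam_def by (intro CollectI exI[of _ "{i+1, j+1}"]) auto
    qed
  qed
qed

lemma Qbar_eq:
  "Qbar n = mplus (msum {..<n} (\<lambda>q. Delta {q+1, n+1}))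
                  (msum (ordered_pairs n) (\<lambda>(i,j). Delta {i+1, j+1, n+1}))"
proof -
  have inj_segments: "inj_on (\<lambda>q. {q+1, n+1}) {..<n}"
    by (auto simp: inj_on_def doubleton_eq_iff)
  have inj_triangles: "inj_on (\<lambda>(i,j). {i+1, j+1, n+1}) (ordered_pairs n)"
  proof (rule inj_onI, clarify)
    fix i j i' j' assume ij: "i < j" "j < n" "i' < j'" "j' < n"
      and eq: "{i+1, j+1, n+1} = {i'+1, j'+1, n+1}"
    have "{i+1, j+1} = {i+1, j+1, n+1} - {n+1}" "{i'+1, j'+1} = {i'+1, j'+1, n+1} - {n+1}"
      using ij by auto
    then have "{i+1, j+1} = {i'+1, j'+1}" using eq by simp
    then show "i = i' \<and> j = j'" using ij by (auto simp: doubleton_eq_iff)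
  qed
  have "{q+1, n+1} \<noteq> {i+1, j+1, n+1}" if "i < j" "j < n" for q i j
  proof
    assume "{q+1, n+1} = {i+1, j+1, n+1}"
    then have "i+1 \<in> {q+1, n+1}" "j+1 \<in> {q+1, n+1}" by blast+
    then show False using that by auto
  qed
  then have disjoint: "(\<lambda>q. {q+1, n+1}) ` {..<n} \<inter> (\<lambda>(i,j). {i+1, j+1, n+1}) ` ordered_pairs n = {}"
    by auto
  have "Qbar n = mplus (msum ((\<lambda>q. {q+1, n+1}) ` {..<n}) Delta)
                       (msum ((\<lambda>(i,j). {i+1, j+1, n+1}) ` ordered_pairs n) Delta)"
    unfolding Qbar_def I_fam_eq using disjoint finite_ordered_pairs by (intro msum_Un) auto
  also have "\<dots> = mplus (msum {..<n} (Delta \<circ> (\<lambda>q. {q+1, n+1})))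
                         (msum (ordered_pairs n) (Delta \<circ> (\<lambda>(i,j). {i+1, j+1, n+1})))"
    by (simp only: msum_reindex[OF inj_segments] msum_reindex[OF inj_triangles])
  finally show ?thesis
    by (simp add: comp_def case_prod_unfold)
qed

lemma Q_image: "affine_map (3*n+1) (coord_change n) (coord_shift n) ` Q n = Qbar n"
proof -
  let ?W1 = "\<lambda>r. \<Sum>q<n. e (2*n+2+q) r"
  let ?W2 = "\<lambda>r. \<Sum>(i,j)\<in>ordered_pairs n. (e (2*n+2+i) + e (2*n+2+j)) r"
  have shift: "(\<lambda>r. if r \<in> {1..3*n+1} then of_int (coord_shift n r) else 0) = - (?W1 + ?W2)"
    using simplex_shifts_sum[of n] by (simp add: minus_equation_iff[of "?W1 + ?W2"])
  have split: "affine_map (3*n+1) (coord_change n) (coord_shift n) (x + y)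
      = (coord_lin n x - ?W1) + (coord_lin n y - ?W2)" for x y
    unfolding affine_map_eq_lin_map_plus[of _ _ "coord_shift n"] lin_map_add shift
    by (simp only: add_uminus_conv_diff add_diff_add)
  have segments: "(\<lambda>x. coord_lin n x - ?W1) `
        msum {..<n} (\<lambda>q. conv_hull {e (3*q+1) + e (3*q+3), e (3*q+2) + e (3*n+1)})
      = msum {..<n} (\<lambda>q. Delta {q+1, n+1})"
    unfolding msum_affine_image[symmetric]
    by (rule msum_cong) (rule segment_image, simp)
  have triangles: "(\<lambda>x. coord_lin n x - ?W2) `
        msum (ordered_pairs n) (\<lambda>(i,j). conv_hull {e (3*i+1) + e (3*i+3) + e (3*j+2),
                                                  e (3*i+2) + e (3*j+1) + e (3*j+3),
                                                  e (3*i+2) + e (3*j+2) + e (3*n+1)})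
      = msum (ordered_pairs n) (\<lambda>(i,j). Delta {i+1, j+1, n+1})"
    unfolding msum_affine_image[symmetric]
    by (rule msum_cong) (clarsimp simp only: mem_Collect_eq case_prod_conv, rule triangle_image)
  show ?thesis
    unfolding Q_def Qbar_eq vadd_eq_plus ordered_pairs_eq
      image_mplus[of _ "\<lambda>x. coord_lin n x - ?W1" "\<lambda>y. coord_lin n y - ?W2", OF split]
      segments triangles ..
qed

lemma Q_subset_Rn: "Q n \<subseteq> Collect (in_Rn (3*n+1))"
  unfolding Q_def vadd_eq_plus
  by (intro mplus_in_Rn msum_in_Rn) (auto intro!: conv_hull_in_Rn in_Rn_add in_Rn_unit_vec)

lemma Qbar_subset_Rn: "Qbar n \<subseteq> Collect (in_Rn (n+1))"
  unfolding Qbar_def Delta_def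
  by (intro msum_in_Rn conv_hull_in_Rn) (auto simp: I_fam_def intro!: in_Rn_unit_vec)

theorem mainTheorem9:
  fixes n :: nat
  assumes "n \<ge> 1"
  shows "unimod_equiv_dims (3*n+1) (Q n) (n+1) (Qbar n)"
proof -
  have "Qbar n \<subseteq> Collect (in_Rn (3*n+1))"
    using Qbar_subset_Rn in_Rn_mono[of "n+1" _ "3*n+1"] by auto
  moreover have "n+1 < 3*n+1" using assms by simp
  ultimately show ?thesis
    unfolding unimod_equiv_dims_def unimod_equiv_def
    using Q_subset_Rn Qbar_subset_Rn int_GL_coord_change Q_image[symmetric] by blast
qed

end
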